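(* Let $D\subset\mathbb{R}^{n+1}$ be a domain with upper base $\gamma(D)$, and let $F:D\times\mathbb{R}\times\mathbb{R}^n\times\mathcal{S}_n\to\mathbb{R}$ satisfy the structure condition (S) below with constants $0<\lambda\le\Lambda$ and bounded continuous functions $b\ge 0$, $c\le 0$ on $D$, together with $F(x,t,0,0,0)=0$ on $D$. Let $u$ be a continuous viscosity subsolution (resp. supersolution) of $$F(x,t,u,Du,D^2u)-\partial_t u=0$$ in $D\cup\gamma(D)$, and suppose $u$ attains a nonnegative maximum (resp. nonpositive minimum) $M$ over $D\cup\gamma(D)$ at some point $(x_0,t_0)\in D\cup\gamma(D)$. Then $u\equiv M$ in the subdomain of $D$ subordinate to $(x_0,t_0)$, i.e. $u(x',t')=M$ at every point $(x',t')\in D$ which can be joined to $(x_0,t_0)$ by a broken line lying in $D\cup\gamma(D)$ (except possibly at $(x_0,t_0)$), uniquely projected onto the $t$-axis, and having $(x_0,t_0)$ as its upper end-point.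
   Context: $\mathcal{S}_n$ denotes the space of real symmetric $n\times n$ matrices; for $N\ge 0$, $\|N\|=\mathrm{Tr}(N)$. Structure condition (S): for all $(x,t)\in D$, $r,s\in\mathbb{R}$, $p,q\in\mathbb{R}^n$, $M,N\in\mathcal{S}_n$ with $N\ge 0$, $$\lambda\|N\|-b(x,t)|p-q|+c(x,t)(r-s)\le F(x,t,r,p,M+N)-F(x,t,s,q,M)\le \Lambda\|N\|+b(x,t)|p-q|+c(x,t)(r-s).$$ (Consequently, viscosity subsolutions satisfy $\mathcal{M}^+_{\lambda,\Lambda}(D^2u)+b|Du|+cu-\partial_tu\ge0$ and supersolutions satisfy $\mathcal{M}^-_{\lambda,\Lambda}(D^2u)-b|Du|+cu-\partial_tu\le0$ in the viscosity sense, where $\mathcal{M}^+_{\lambda,\Lambda}(X)=\sup_{\lambda I\le A\le\Lambda I}\mathrm{Tr}(AX)$, $\mathcal{M}^-_{\lambda,\Lambda}(X)=\inf_{\lambda I\le A\le\Lambda I}\mathrm{Tr}(AX)$.) Cylinders: $\mathbb{Q}^{t_1,t_2}_{x,R}=\{(y,s):|y-x|<R,\ t_1<s<t_2\}$. Upper base $\gamma(D)$: the set of points $(x,t)\in\partial D$ for which there is $h>0$ such that $\mathbb{Q}^{t-h,t}_{x,h}\subset D$ while $\mathbb{Q}^{t,t+h}_{x,h}$ lies outside $D$. Being a viscosity subsolution (supersolution) in $D\cup\gamma(D)$ means the viscosity inequalities hold also at points of $\gamma(D)$ (tested with functions touching from the past side, as usual for parabolic problems up to the terminal time). *)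

theory Defs
  imports "HOL-Analysis.Analysis"
begin

definition sym_mat :: "real^'n^'n \<Rightarrow> bool" where
  "sym_mat M \<longleftrightarrow> transpose M = M"

definition psd_mat :: "real^'n^'n \<Rightarrow> bool" where
  "psd_mat N \<longleftrightarrow> (\<forall>v. 0 \<le> v \<bullet> (N *v v))"

definition cyl :: "real^'n \<Rightarrow> real \<Rightarrow> real \<Rightarrow> real \<Rightarrow> ((real^'n) \<times> real) set" where
  "cyl x R t1 t2 = {(y,s). dist y x < R \<and> t1 < s \<and> s < t2}"

definition upper_base :: "((real^'n) \<times> real) set \<Rightarrow> ((real^'n) \<times> real) set" where
  "upper_base D = {(x,t) \<in> frontier D. \<exists>h>0. cyl x h (t - h) t \<subseteq> D \<and> cyl x h t (t + h) \<inter> D = {}}"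

definition struct_S ::
  "(real^'n \<Rightarrow> real \<Rightarrow> real \<Rightarrow> real^'n \<Rightarrow> real^'n^'n \<Rightarrow> real) \<Rightarrow> ((real^'n) \<times> real) set \<Rightarrow>
   real \<Rightarrow> real \<Rightarrow> (real^'n \<Rightarrow> real \<Rightarrow> real) \<Rightarrow> (real^'n \<Rightarrow> real \<Rightarrow> real) \<Rightarrow> bool" where
  "struct_S F E lam Lam b c \<longleftrightarrow>
     (\<forall>(x,t)\<in>E. \<forall>r s p q M N. sym_mat M \<and> sym_mat N \<and> psd_mat N \<longrightarrow>
        lam * trace N - b x t * norm (p - q) + c x t * (r - s) \<le> F x t r p (M + N) - F x t s q M \<and>
        F x t r p (M + N) - F x t s q M \<le> Lam * trace N + b x t * norm (p - q) + c x t * (r - s))"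

definition C21_on ::
  "((real^'n) \<times> real) set \<Rightarrow> (real^'n \<Rightarrow> real \<Rightarrow> real) \<Rightarrow> (real^'n \<Rightarrow> real \<Rightarrow> real^'n) \<Rightarrow>
   (real^'n \<Rightarrow> real \<Rightarrow> real^'n^'n) \<Rightarrow> (real^'n \<Rightarrow> real \<Rightarrow> real) \<Rightarrow> bool" where
  "C21_on U phi Dphi D2phi phit \<longleftrightarrow> open U \<and>
     (\<forall>(y,s)\<in>U. ((\<lambda>z. phi z s) has_derivative (\<lambda>h. Dphi y s \<bullet> h)) (at y) \<and>
                ((\<lambda>z. Dphi z s) has_derivative (\<lambda>h. D2phi y s *v h)) (at y) \<and>
                ((\<lambda>r. phi y r) has_real_derivative phit y s) (at s)) \<and>
     continuous_on U (\<lambda>(y,s). phi y s) \<and> continuous_on U (\<lambda>(y,s). Dphi y s) \<and>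
     continuous_on U (\<lambda>(y,s). D2phi y s) \<and> continuous_on U (\<lambda>(y,s). phit y s)"

text \<open>Test neighbourhood of (x0,t0) of size r relative to D: a full neighbourhood inside D if
  (x0,t0) is in D; only the past side (s \<le> t0) if (x0,t0) is a point of the upper base.\<close>
definition test_nbhd :: "((real^'n) \<times> real) set \<Rightarrow> real^'n \<Rightarrow> real \<Rightarrow> real \<Rightarrow> ((real^'n) \<times> real) set" where
  "test_nbhd D x0 t0 r =
     (if (x0,t0) \<in> D then {(y,s) \<in> D. dist y x0 < r \<and> \<bar>s - t0\<bar> < r}
      else insert (x0,t0) {(y,s) \<in> D. dist y x0 < r \<and> t0 - r < s \<and> s < t0})"

definition visc_sub ::
  "(real^'n \<Rightarrow> real \<Rightarrow> real \<Rightarrow> real^'n \<Rightarrow> real^'n^'n \<Rightarrow> real) \<Rightarrow> ((real^'n) \<times> real) set \<Rightarrow>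
   (real^'n \<Rightarrow> real \<Rightarrow> real) \<Rightarrow> bool" where
  "visc_sub F D u \<longleftrightarrow>
     (\<forall>x0 t0. (x0,t0) \<in> D \<union> upper_base D \<longrightarrow>
       (\<forall>U phi Dphi D2phi phit. (x0,t0) \<in> U \<and> C21_on U phi Dphi D2phi phit \<and>
          (\<exists>r>0. \<forall>(y,s)\<in>test_nbhd D x0 t0 r. u y s - phi y s \<le> u x0 t0 - phi x0 t0) \<longrightarrow>
          F x0 t0 (u x0 t0) (Dphi x0 t0) (D2phi x0 t0) - phit x0 t0 \<ge> 0))"

definition visc_super ::
  "(real^'n \<Rightarrow> real \<Rightarrow> real \<Rightarrow> real^'n \<Rightarrow> real^'n^'n \<Rightarrow> real) \<Rightarrow> ((real^'n) \<times> real) set \<Rightarrow>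
   (real^'n \<Rightarrow> real \<Rightarrow> real) \<Rightarrow> bool" where
  "visc_super F D u \<longleftrightarrow>
     (\<forall>x0 t0. (x0,t0) \<in> D \<union> upper_base D \<longrightarrow>
       (\<forall>U phi Dphi D2phi phit. (x0,t0) \<in> U \<and> C21_on U phi Dphi D2phi phit \<and>
          (\<exists>r>0. \<forall>(y,s)\<in>test_nbhd D x0 t0 r. u y s - phi y s \<ge> u x0 t0 - phi x0 t0) \<longrightarrow>
          F x0 t0 (u x0 t0) (Dphi x0 t0) (D2phi x0 t0) - phit x0 t0 \<le> 0))"

definition broken_line_set :: "('a::real_vector) list \<Rightarrow> 'a set" where
  "broken_line_set ps = set ps \<union> (\<Union>i<length ps - 1. closed_segment (ps ! i) (ps ! Suc i))"

definition subordinate :: "((real^'n) \<times> real) set \<Rightarrow> (real^'n) \<times> real \<Rightarrow> (real^'n) \<times> real \<Rightarrow> bool" where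
  "subordinate D p0 p \<longleftrightarrow>
     (\<exists>ps. ps \<noteq> [] \<and> hd ps = p0 \<and> last ps = p \<and>
        broken_line_set ps - {p0} \<subseteq> D \<union> upper_base D \<and>
        inj_on snd (broken_line_set ps) \<and>
        (\<forall>q\<in>broken_line_set ps. snd q \<le> snd p0))"

end

theory Submission
  imports Defs "HOL-Real_Asymp.Real_Asymp"
begin

text \<open>Nirenberg's barrier argument. If u attains its maximum M at (x1,t1) but u(y0,s0) < M at a
  point just below, compare u on a cylinder over [s0,t1) with
  w = M - \<epsilon>(E - 1) + \<eta>/(t1 - t), where E is a heat-kernel-like bump centred at (y0, s0 - \<sigma>)
  whose exponents turn w into a strict supersolution. The maximum principle for u - w gives
  u \<le> w; letting \<eta> \<rightarrow> 0 and t \<rightarrow> t1 yields M \<le> M - \<epsilon>(E(x1,t1) - 1), which is absurd once the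
  bump is normalised to E(x1,t1) = e and \<sigma> is so small that E \<le> 1 on the parabolic boundary
  away from y0. Hence the maximum spreads to a small past cylinder below every maximum point.
  Along a broken line that is monotone in time, the lowest point where u = M would be
  approached from below by further such points, so u = M on the whole line. Supersolutions
  reduce to subsolutions via u \<mapsto> -u and F(x,t,r,p,X) \<mapsto> -F(x,t,-r,-p,-X).\<close>

section \<open>The structure condition and reflection\<close>

definition outer_prod :: "real^'n \<Rightarrow> real^'n^'n" where
  "outer_prod z = (\<chi> i j. z$i * z$j)"

lemma outer_prod_mult_vector: "outer_prod z *v h = (z \<bullet> h) *\<^sub>R z"
  by (simp add: outer_prod_def vec_eq_iff matrix_vector_mult_def inner_vec_def sum_distrib_left
      mult.commute mult.left_commute)

lemma sym_mat_scaleR_outer_prod: "sym_mat (c *\<^sub>R outer_prod z)"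
  by (simp add: sym_mat_def outer_prod_def transpose_def vec_eq_iff mult.commute)

lemma sym_mat_scaleR_id: "sym_mat (c *\<^sub>R (mat 1 :: real^'n^'n))"
  by (simp add: sym_mat_def transpose_def vec_eq_iff mat_def)

lemma psd_mat_scaleR_outer_prod: "0 \<le> c \<Longrightarrow> psd_mat (c *\<^sub>R outer_prod z)"
  by (simp add: psd_mat_def scaleR_matrix_vector_assoc[symmetric] outer_prod_mult_vector
      inner_commute[of _ z] mult.assoc)

lemma psd_mat_scaleR_id: "0 \<le> c \<Longrightarrow> psd_mat (c *\<^sub>R (mat 1 :: real^'n^'n))"
  by (simp add: psd_mat_def scaleR_matrix_vector_assoc[symmetric])

lemma trace_scaleR_outer_prod: "trace (c *\<^sub>R outer_prod z) = c * (z \<bullet> z)"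
  by (simp add: trace_def outer_prod_def inner_vec_def sum_distrib_left power2_eq_square)

lemma trace_scaleR_id: "trace (c *\<^sub>R (mat 1 :: real^'n^'n)) = c * CARD('n)"
  by (simp add: trace_def mat_def)

lemma struct_S_subset: "struct_S F E lam Lam b c \<Longrightarrow> E' \<subseteq> E \<Longrightarrow> struct_S F E' lam Lam b c"
  unfolding struct_S_def by blast

lemma struct_S_upper_bound:
  fixes F :: "real^'n \<Rightarrow> real \<Rightarrow> real \<Rightarrow> real^'n \<Rightarrow> real^'n^'n \<Rightarrow> real"
  assumes S: "struct_S F E lam Lam b c" and xt: "(x,t) \<in> E" and F0: "F x t 0 0 0 = 0"
    and c1: "0 \<le> c1" and c2: "0 \<le> c2"
  shows "F x t r p (c1 *\<^sub>R mat 1 - c2 *\<^sub>R outer_prod z) \<le>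
         Lam * c1 * CARD('n) - lam * c2 * (z \<bullet> z) + b x t * norm p + c x t * r"
proof -
  have sym: "sym_mat ((-c2) *\<^sub>R outer_prod z)" by (rule sym_mat_scaleR_outer_prod)
  have "F x t r p ((-c2) *\<^sub>R outer_prod z + c1 *\<^sub>R mat 1) - F x t 0 0 ((-c2) *\<^sub>R outer_prod z)
        \<le> Lam * trace (c1 *\<^sub>R (mat 1 :: real^'n^'n)) + b x t * norm (p - 0) + c x t * (r - 0)"
    using S xt sym sym_mat_scaleR_id psd_mat_scaleR_id[OF c1] unfolding struct_S_def by fast
  moreover have "lam * trace (c2 *\<^sub>R outer_prod z) - b x t * norm (0 - 0::real^'n) + c x t * (0 - 0)
        \<le> F x t 0 0 ((-c2) *\<^sub>R outer_prod z + c2 *\<^sub>R outer_prod z) - F x t 0 0 ((-c2) *\<^sub>R outer_prod z)"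
    using S xt sym sym_mat_scaleR_outer_prod psd_mat_scaleR_outer_prod[OF c2]
    unfolding struct_S_def by fast
  moreover have "(-c2) *\<^sub>R outer_prod z + c1 *\<^sub>R mat 1 = c1 *\<^sub>R mat 1 - c2 *\<^sub>R outer_prod z"
    by simp
  ultimately show ?thesis using F0 by (simp add: trace_scaleR_outer_prod trace_scaleR_id)
qed

lemma struct_S_reflect:
  fixes F :: "real^'n \<Rightarrow> real \<Rightarrow> real \<Rightarrow> real^'n \<Rightarrow> real^'n^'n \<Rightarrow> real"
  assumes "struct_S F E lam Lam b c"
  shows "struct_S (\<lambda>x t r p X. - F x t (-r) (-p) (-X)) E lam Lam b c"
  unfolding struct_S_def
proof (intro ballI allI impI, clarify)
  fix x t and r s :: real and p q :: "real^'n" and M N :: "real^'n^'n"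
  assume xt: "(x,t) \<in> E" and MN: "sym_mat M" "sym_mat N" "psd_mat N"
  have "sym_mat (- M - N)"
    using MN(1,2) by (simp add: sym_mat_def transpose_def vec_eq_iff)
  then have "lam * trace N - b x t * norm (-q - -p) + c x t * (-s - -r)
          \<le> F x t (-s) (-q) (- M - N + N) - F x t (-r) (-p) (- M - N) \<and>
        F x t (-s) (-q) (- M - N + N) - F x t (-r) (-p) (- M - N)
          \<le> Lam * trace N + b x t * norm (-q - -p) + c x t * (-s - -r)"
    using assms xt MN(2,3) unfolding struct_S_def by blast
  moreover have "norm (-q - -p) = norm (p - q)"
    by (metis minus_diff_eq minus_diff_minus norm_minus_cancel)
  ultimately show "lam * trace N - b x t * norm (p - q) + c x t * (r - s)
          \<le> - F x t (- r) (- p) (- (M + N)) - - F x t (- s) (- q) (- M) \<and>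
        - F x t (- r) (- p) (- (M + N)) - - F x t (- s) (- q) (- M)
          \<le> Lam * trace N + b x t * norm (p - q) + c x t * (r - s)"
    by (simp add: algebra_simps)
qed

lemma matrix_vector_mult_uminus_left: "(- A) *v h = - (A *v h)" for A :: "real^'n^'m"
  by (simp add: vec_eq_iff matrix_vector_mult_def sum_negf)

lemma C21_on_uminus:
  assumes "C21_on U phi Dphi D2phi phit"
  shows "C21_on U (\<lambda>x t. - phi x t) (\<lambda>x t. - Dphi x t) (\<lambda>x t. - D2phi x t) (\<lambda>x t. - phit x t)"
  using assms unfolding C21_on_def case_prod_unfold
proof (intro conjI ballI; (elim conjE)?)
  fix p assume H: "\<forall>p\<in>U. ((\<lambda>z. phi z (snd p)) has_derivative (\<lambda>h. Dphi (fst p) (snd p) \<bullet> h)) (at (fst p)) \<and>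
        ((\<lambda>z. Dphi z (snd p)) has_derivative (\<lambda>h. D2phi (fst p) (snd p) *v h)) (at (fst p)) \<and>
        ((\<lambda>r. phi (fst p) r) has_real_derivative phit (fst p) (snd p)) (at (snd p))" and p: "p \<in> U"
  show "((\<lambda>z. - phi z (snd p)) has_derivative (\<lambda>h. - Dphi (fst p) (snd p) \<bullet> h)) (at (fst p))"
    using has_derivative_minus[OF H[rule_format, OF p, THEN conjunct1]] by simp
  show "((\<lambda>z. - Dphi z (snd p)) has_derivative (\<lambda>h. - D2phi (fst p) (snd p) *v h)) (at (fst p))"
    using has_derivative_minus[OF H[rule_format, OF p, THEN conjunct2, THEN conjunct1]]
    by (simp add: matrix_vector_mult_uminus_left)
  show "((\<lambda>r. - phi (fst p) r) has_real_derivative - phit (fst p) (snd p)) (at (snd p))"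
    using DERIV_minus[OF H[rule_format, OF p, THEN conjunct2, THEN conjunct2]] by simp
qed (auto intro: continuous_intros)

lemma visc_super_reflect:
  fixes F :: "real^'n \<Rightarrow> real \<Rightarrow> real \<Rightarrow> real^'n \<Rightarrow> real^'n^'n \<Rightarrow> real"
  assumes "visc_super F D u"
  shows "visc_sub (\<lambda>x t r p X. - F x t (-r) (-p) (-X)) D (\<lambda>x t. - u x t)"
  unfolding visc_sub_def
proof (intro allI impI, elim conjE exE)
  fix x0 t0 U phi Dphi D2phi phit r
  assume P: "(x0, t0) \<in> D \<union> upper_base D" and U: "(x0,t0) \<in> U"
    and C: "C21_on U phi Dphi D2phi phit" and r: "r > 0"
    and loc: "\<forall>(y, s)\<in>test_nbhd D x0 t0 r. - u y s - phi y s \<le> - u x0 t0 - phi x0 t0"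
  have "\<forall>(y, s)\<in>test_nbhd D x0 t0 r. u y s - (- phi y s) \<ge> u x0 t0 - (- phi x0 t0)"
    using loc by auto
  then have "F x0 t0 (u x0 t0) (- Dphi x0 t0) (- D2phi x0 t0) - (- phit x0 t0) \<le> 0"
    using assms[unfolded visc_super_def, rule_format, OF P, of U "\<lambda>x t. - phi x t"
        "\<lambda>x t. - Dphi x t" "\<lambda>x t. - D2phi x t" "\<lambda>x t. - phit x t"] U C21_on_uminus[OF C] r
    by blast
  then show "0 \<le> - F x0 t0 (- (- u x0 t0)) (- Dphi x0 t0) (- D2phi x0 t0) - phit x0 t0" by simp
qed

section \<open>Cylinders and broken lines\<close>

lemma past_cylinder_in_domain:
  fixes D :: "((real^'n) \<times> real) set"
  assumes "open D" and "(x1,t1) \<in> D \<union> upper_base D"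
  shows "\<exists>h>0. \<forall>x t. dist x x1 < h \<and> t1 - h < t \<and> t < t1 \<longrightarrow> (x,t) \<in> D"
proof (cases "(x1,t1) \<in> D")
  case True
  then obtain e where e: "e > 0" "ball (x1,t1) e \<subseteq> D"
    using \<open>open D\<close> open_contains_ball by blast
  show ?thesis
  proof (intro exI[of _ "e/2"] conjI allI impI)
    fix x t assume xt: "dist x x1 < e/2 \<and> t1 - e/2 < t \<and> t < t1"
    have "dist (x,t) (x1,t1) \<le> dist x x1 + \<bar>t - t1\<bar>"
      unfolding dist_Pair_Pair dist_real_def
      using sqrt_sum_squares_le_sum_abs[of "dist x x1" "t - t1"] by simp
    also have "\<dots> < e" using xt by simp
    finally show "(x,t) \<in> D" using e by (auto simp: dist_commute)
  qed (use e in simp)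
next
  case False
  then obtain h where "h > 0" "cyl x1 h (t1 - h) t1 \<subseteq> D"
    using assms(2) unfolding upper_base_def by auto
  then show ?thesis unfolding cyl_def by (intro exI[of _ h]) auto
qed

lemma broken_line_set_Cons:
  assumes "ps \<noteq> []"
  shows "broken_line_set (p # ps) = closed_segment p (hd ps) \<union> broken_line_set ps"
proof -
  obtain q qs where pq: "ps = q # qs" using assms by (cases ps) auto
  have "(\<Union>i<length (p # ps) - 1. closed_segment ((p # ps) ! i) ((p # ps) ! Suc i))
        = closed_segment p q \<union> (\<Union>i<length ps - 1. closed_segment (ps ! i) (ps ! Suc i))"
    unfolding pq by (simp add: lessThan_Suc_eq_insert_0 UN_insert image_Suc_lessThan[symmetric])
  then show ?thesis unfolding broken_line_set_def using pq by auto
qed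

lemma hd_in_broken_line_set: "ps \<noteq> [] \<Longrightarrow> hd ps \<in> broken_line_set ps"
  by (simp add: broken_line_set_def)

lemma last_in_broken_line_set: "ps \<noteq> [] \<Longrightarrow> last ps \<in> broken_line_set ps"
  by (simp add: broken_line_set_def)

lemma compact_connected_broken_line_set:
  fixes ps :: "'a::real_normed_vector list"
  assumes "ps \<noteq> []"
  shows "compact (broken_line_set ps) \<and> connected (broken_line_set ps)"
  using assms
proof (induction ps)
  case (Cons p ps)
  show ?case
  proof (cases "ps = []")
    case True
    then show ?thesis by (simp add: broken_line_set_def)
  next
    case False
    have "hd ps \<in> closed_segment p (hd ps) \<inter> broken_line_set ps"
      using hd_in_broken_line_set[OF False] by simp
    then show ?thesis unfolding broken_line_set_Cons[OF False] using Cons.IH False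
      by (auto intro!: compact_Un connected_Un compact_segment connected_segment)
  qed
qed simp

lemma connected_inj_snd_approach_from_past:
  fixes L :: "('a::metric_space \<times> real) set"
  assumes "connected L" and inj: "inj_on snd L" and "p \<in> L" "q \<in> L" "snd p < snd q" "0 < e"
  shows "\<exists>q'\<in>L. snd q' < snd q \<and> dist q' q < e"
proof (rule ccontr)
  assume none: "\<not> ?thesis"
  have "L \<subseteq> {q'. snd q' < snd q} \<union> ({q'. snd q < snd q'} \<union> ball q e)"
  proof
    fix q' assume "q' \<in> L"
    then have "snd q' = snd q \<Longrightarrow> q' = q" using inj \<open>q \<in> L\<close> by (auto dest: inj_onD)
    then show "q' \<in> {q'. snd q' < snd q} \<union> ({q'. snd q < snd q'} \<union> ball q e)"
      using \<open>0 < e\<close> by (cases "snd q'" "snd q" rule: linorder_cases) auto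
  qed
  moreover have "{q'. snd q' < snd q} \<inter> ({q'. snd q < snd q'} \<union> ball q e) \<inter> L = {}"
    using none by (auto simp: dist_commute)
  ultimately have "{q'. snd q' < snd q} \<inter> L = {} \<or> ({q'. snd q < snd q'} \<union> ball q e) \<inter> L = {}"
    by (intro connectedD[OF \<open>connected L\<close>] open_Un open_ball open_Collect_less continuous_intros)
  moreover have "p \<in> {q'. snd q' < snd q} \<inter> L" "q \<in> ({q'. snd q < snd q'} \<union> ball q e) \<inter> L"
    using assms by auto
  ultimately show False by blast
qed

lemma lowest_point_of_level_set:
  fixes L :: "('a::metric_space \<times> real) set" and f :: "'a \<times> real \<Rightarrow> real"
  assumes "compact L" "continuous_on L f" "p \<in> L" "f p = c" "t' \<le> snd p"
  obtains q where "q \<in> L" "f q = c" "t' \<le> snd q"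
    "\<And>q'. q' \<in> L \<Longrightarrow> f q' = c \<Longrightarrow> t' \<le> snd q' \<Longrightarrow> snd q \<le> snd q'"
proof -
  define St where "St = L \<inter> {q \<in> L. f q = c} \<inter> {q. t' \<le> snd q}"
  have "closed {q \<in> L. f q = c}"
    by (rule continuous_closed_preimage_constant[OF assms(2) compact_imp_closed[OF assms(1)]])
  then have "compact St"
    unfolding St_def by (intro compact_Int_closed assms(1) closed_Collect_le continuous_intros)
  moreover have "p \<in> St" using assms by (simp add: St_def)
  ultimately obtain q where "q \<in> St" "\<forall>q'\<in>St. snd q \<le> snd q'"
    using continuous_attains_inf[OF _ _ continuous_on_snd[OF continuous_on_id]] by blast
  then show ?thesis using that[of q] unfolding St_def by blast
qed

section \<open>The barrier\<close>

text \<open>After multiplication by s, the positive terms add up to at most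
  \<delta>(2m + 2K + 2 + a) \<le> a R^2/4 \<le> a z^2.\<close>

lemma lateral_exponent_nonpos:
  fixes m K a \<sigma> T \<delta> d R s \<tau> z :: real
  assumes m: "m \<ge> 0" and K: "K \<ge> 0" and a: "a > 0" and \<sigma>: "0 < \<sigma>" "\<sigma> \<le> \<delta>"
    and T: "0 < T" "T \<le> \<delta>" and d: "0 \<le> d" "d \<le> \<delta>" and \<delta>1: "\<delta> \<le> 1" and \<delta>R: "\<delta> \<le> R / 2"
    and \<delta>C: "\<delta> * (2*m + 2*K + 2 + a) \<le> a * R^2 / 4"
    and s: "\<sigma> \<le> s" "s \<le> T + \<sigma>" and \<tau>: "0 \<le> \<tau>" and z: "R - \<delta> \<le> z"
  shows "m * ln (T + \<sigma>) + K * T + a * d^2 / (T + \<sigma>) + 1 - m * ln s - K * \<tau> - a * z^2 / s \<le> 0"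
proof -
  have s0: "s > 0" and Ts: "T + \<sigma> > 0" using s \<sigma> T by linarith+
  have "s * (ln (T + \<sigma>) - ln s) \<le> s * ((T + \<sigma>) / s - 1)"
    using ln_le_minus_one[of "(T+\<sigma>)/s"] s0 Ts by (simp add: ln_div)
  also have "\<dots> = T + \<sigma> - s" using s0 by (simp add: field_simps)
  finally have A: "m * (s * (ln (T + \<sigma>) - ln s)) \<le> m * (2 * \<delta>)"
    using m s T \<sigma> by (intro mult_left_mono) auto
  have B: "s * (K * T + 1) \<le> (2 * \<delta>) * (K * \<delta> + 1)"
    using s T \<sigma> K s0 by (intro mult_mono add_mono mult_left_mono) auto
  have "s * (a * d^2 / (T + \<sigma>)) \<le> (T + \<sigma>) * (a * d^2 / (T + \<sigma>))"
    using s a Ts by (intro mult_right_mono) auto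
  also have "\<dots> = a * d^2" using Ts by simp
  also have "\<dots> \<le> a * \<delta>^2" using d a by (intro mult_left_mono power_mono) auto
  also have "\<dots> \<le> a * \<delta>" using d \<delta>1 a by (simp add: power2_eq_square mult_left_le)
  finally have C: "s * (a * d^2 / (T + \<sigma>)) \<le> a * \<delta>" .
  have D: "(2 * \<delta>) * (K * \<delta> + 1) \<le> 2 * \<delta> * (K + 1)"
    using d \<delta>1 K by (intro mult_left_mono add_right_mono mult_left_le) auto
  have "s * (m * ln (T + \<sigma>) + K * T + a * d^2 / (T + \<sigma>) + 1 - m * ln s)
        = m * (s * (ln (T + \<sigma>) - ln s)) + s * (K * T + 1) + s * (a * d^2 / (T + \<sigma>))"
    by (simp add: algebra_simps)
  also have "\<dots> \<le> \<delta> * (2*m + 2*K + 2 + a)" using A B C D by (simp add: algebra_simps)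
  also have "\<dots> \<le> a * R^2 / 4" by (rule \<delta>C)
  also have "\<dots> \<le> a * z^2"
  proof -
    have "(R/2)^2 \<le> z^2" using z \<delta>R d by (intro power_mono) auto
    then show ?thesis using a by (simp add: power_divide)
  qed
  finally have "m * ln (T + \<sigma>) + K * T + a * d^2 / (T + \<sigma>) + 1 - m * ln s \<le> a * z^2 / s"
    using s0 by (simp add: field_simps mult.commute)
  then show ?thesis using K \<tau> by (smt (verit) mult_nonneg_nonneg)
qed

lemma bottom_exponent_nonpos:
  fixes m K a \<sigma> T d \<rho> z :: real
  assumes "a > 0" "0 < \<sigma>" "0 < T" "0 \<le> \<rho>" "\<rho> \<le> z"
    and small: "m * (\<sigma> * ln (T + \<sigma>) - \<sigma> * ln \<sigma>) + \<sigma> * (K * T + a * d^2 / T + 1) < a * \<rho>^2"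
  shows "m * ln (T + \<sigma>) + K * T + a * d^2 / (T + \<sigma>) + 1 - m * ln \<sigma> - a * z^2 / \<sigma> \<le> 0"
proof -
  have "a * d^2 / (T + \<sigma>) \<le> a * d^2 / T" using assms by (intro divide_left_mono) auto
  then have "\<sigma> * (a * d^2 / (T + \<sigma>)) \<le> \<sigma> * (a * d^2 / T)" using assms by (intro mult_left_mono) auto
  then have "\<sigma> * (m * ln (T + \<sigma>) + K * T + a * d^2 / (T + \<sigma>) + 1 - m * ln \<sigma>) < a * \<rho>^2"
    using small by (simp add: algebra_simps)
  also have "\<dots> \<le> a * z^2" using assms by (intro mult_left_mono power_mono) auto
  finally show ?thesis using \<open>0 < \<sigma>\<close> by (simp add: field_simps mult.commute)
qed

lemma small_shift_exists:
  fixes T m C e \<delta> :: real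
  assumes "T > 0" "e > 0" "\<delta> > 0"
  shows "\<exists>\<sigma>. 0 < \<sigma> \<and> \<sigma> \<le> \<delta> \<and> m * (\<sigma> * ln (T + \<sigma>) - \<sigma> * ln \<sigma>) + \<sigma> * C < e"
proof -
  have "((\<lambda>x::real. x * ln x) \<longlongrightarrow> 0) (at_right 0)" by real_asymp
  then have "((\<lambda>\<sigma>. m * (\<sigma> * ln (T + \<sigma>) - \<sigma> * ln \<sigma>) + \<sigma> * C)
               \<longlongrightarrow> m * (0 * ln (T + 0) - 0) + 0 * C) (at_right 0)"
    by (intro tendsto_intros) (use assms in auto)
  then have "eventually (\<lambda>\<sigma>. m * (\<sigma> * ln (T + \<sigma>) - \<sigma> * ln \<sigma>) + \<sigma> * C < e) (at_right 0)"
    using assms by (intro order_tendstoD(2)) auto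
  moreover have "eventually (\<lambda>\<sigma>. 0 < \<sigma> \<and> \<sigma> \<le> \<delta>) (at_right (0::real))"
    using assms by (auto simp: eventually_at_right intro!: exI[of _ \<delta>])
  ultimately have "eventually (\<lambda>\<sigma>. 0 < \<sigma> \<and> \<sigma> \<le> \<delta> \<and>
      m * (\<sigma> * ln (T + \<sigma>) - \<sigma> * ln \<sigma>) + \<sigma> * C < e) (at_right (0::real))"
    by eventually_elim auto
  then show ?thesis using eventually_happens' trivial_limit_at_right_real by blast
qed

locale max_principle_setting =
  fixes D :: "((real^'n) \<times> real) set"
    and F :: "real^'n \<Rightarrow> real \<Rightarrow> real \<Rightarrow> real^'n \<Rightarrow> real^'n^'n \<Rightarrow> real"
    and u :: "real^'n \<Rightarrow> real \<Rightarrow> real"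
    and lam Lam :: real and b c :: "real^'n \<Rightarrow> real \<Rightarrow> real" and C M :: real
  assumes open_D: "open D"
    and struct_F: "struct_S F D lam Lam b c"
    and lam_pos: "0 < lam" and lam_le_Lam: "lam \<le> Lam"
    and coeff_bounds: "\<forall>(x,t)\<in>D. b x t \<le> C \<and> c x t \<le> 0 \<and> - c x t \<le> C"
    and C_nonneg: "0 \<le> C"
    and F_zero: "\<forall>(x,t)\<in>D. F x t 0 0 0 = 0"
    and subsolution: "visc_sub F D u"
    and u_cont: "continuous_on (D \<union> upper_base D) (\<lambda>(x,t). u x t)"
    and u_le_M: "\<forall>(x,t)\<in>D. u x t \<le> M"
    and M_nonneg: "0 \<le> M"
begin

definition a :: real where "a = 1 / (2 * lam)"
definition m :: real where "m = 2 * a * Lam * CARD('n)"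
definition K :: real where "K = a * C^2 + C + 1"

lemma a_pos: "0 < a"
  using lam_pos by (simp add: a_def)

lemma m_nonneg: "0 \<le> m"
  using a_pos lam_pos lam_le_Lam by (simp add: m_def)

lemma K_nonneg: "0 \<le> K"
  using a_pos C_nonneg by (simp add: K_def)

end

locale bump_barrier = max_principle_setting D F u lam Lam b c C M
  for D :: "((real^'n) \<times> real) set" and F u lam Lam b c C M +
  fixes y0 :: "real^'n" and s0 \<sigma> \<theta> \<epsilon> t1 :: real
  assumes \<sigma>_pos: "0 < \<sigma>" and \<epsilon>_pos: "0 < \<epsilon>"
begin

text \<open>E is a heat-kernel-like bump centred at (y0, s0 - \<sigma>), steepened by the exponents a, m, K
  so that M - \<epsilon>(E - 1) is a strict supersolution; the penalty \<eta>/(t1 - t) keeps maxima of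
  u - w away from the top t = t1.\<close>

definition S :: "real \<Rightarrow> real" where
  "S t = t - s0 + \<sigma>"

definition E :: "real^'n \<Rightarrow> real \<Rightarrow> real" where
  "E x t = exp (\<theta> - m * ln (S t) - K * (t - s0) - a * ((x - y0) \<bullet> (x - y0)) / S t)"

definition w :: "real \<Rightarrow> real^'n \<Rightarrow> real \<Rightarrow> real" where
  "w \<eta> x t = M - \<epsilon> * (E x t - 1) + \<eta> / (t1 - t)"

definition Dw :: "real^'n \<Rightarrow> real \<Rightarrow> real^'n" where
  "Dw x t = (\<epsilon> * E x t * (2 * a / S t)) *\<^sub>R (x - y0)"

definition D2w :: "real^'n \<Rightarrow> real \<Rightarrow> real^'n^'n" where
  "D2w x t = (\<epsilon> * E x t * (2 * a / S t)) *\<^sub>R mat 1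
             - (\<epsilon> * E x t * (4 * a^2 / (S t)^2)) *\<^sub>R outer_prod (x - y0)"

definition wt :: "real \<Rightarrow> real^'n \<Rightarrow> real \<Rightarrow> real" where
  "wt \<eta> x t = - \<epsilon> * E x t * (- m / S t - K + a * ((x - y0) \<bullet> (x - y0)) / (S t)^2)
              + \<eta> / (t1 - t)^2"

definition U :: "((real^'n) \<times> real) set" where
  "U = {p. s0 - \<sigma> < snd p \<and> snd p < t1}"

lemma E_has_derivative_space:
  assumes "0 < S t"
  shows "((\<lambda>x. E x t) has_derivative (\<lambda>h. (- 2 * a / S t * E y t) * ((y - y0) \<bullet> h))) (at y)"
  unfolding E_def
  apply (rule derivative_eq_intros refl)+
  using assms by (auto simp: field_simps inner_commute inner_diff_left inner_diff_right)

lemma w_has_derivative_space: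
  assumes "0 < S t"
  shows "((\<lambda>x. w \<eta> x t) has_derivative (\<lambda>h. Dw y t \<bullet> h)) (at y)"
  unfolding w_def Dw_def
  apply (rule derivative_eq_intros refl E_has_derivative_space assms)+
  using assms by (auto simp: fun_eq_iff field_simps inner_commute inner_diff_right)

lemma Dw_has_derivative_space:
  assumes "0 < S t"
  shows "((\<lambda>x. Dw x t) has_derivative (\<lambda>h. D2w y t *v h)) (at y)"
  unfolding Dw_def D2w_def
  apply (rule derivative_eq_intros refl E_has_derivative_space assms)+
  using assms by (simp add: fun_eq_iff matrix_vector_mult_diff_rdistrib outer_prod_mult_vector
      scaleR_matrix_vector_assoc[symmetric] power2_eq_square)

lemma E_has_derivative_time:
  assumes "0 < S t"
  shows "((\<lambda>r. E x r) has_real_derivative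
           E x t * (- m / S t - K + a * ((x - y0) \<bullet> (x - y0)) / (S t)^2)) (at t)"
proof -
  have "((\<lambda>r. \<theta> - m * ln (S r) - K * (r - s0) - a * ((x - y0) \<bullet> (x - y0)) / S r)
         has_real_derivative (- m / S t - K + a * ((x - y0) \<bullet> (x - y0)) / (S t)^2)) (at t)"
    unfolding S_def using assms
    by (auto intro!: derivative_eq_intros simp: S_def field_simps power2_eq_square)
  from DERIV_exp[THEN DERIV_chain2, OF this] show ?thesis unfolding E_def by simp
qed

lemma w_has_derivative_time:
  assumes "0 < S t" "t < t1"
  shows "((\<lambda>r. w \<eta> x r) has_real_derivative wt \<eta> x t) (at t)"
  unfolding w_def wt_def
  apply (rule derivative_eq_intros refl E_has_derivative_time assms)+
  using assms by (auto simp: field_simps power2_eq_square)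

lemma U_iff: "(x,t) \<in> U \<longleftrightarrow> 0 < S t \<and> t < t1"
  by (auto simp: U_def S_def)

lemma continuous_on_E: "continuous_on U (\<lambda>p. E (fst p) (snd p))"
proof -
  have "\<forall>p\<in>U. 0 < S (snd p)" using U_iff by force
  then show ?thesis unfolding E_def S_def by (intro continuous_intros) auto
qed

lemma C21_on_w: "C21_on U (w \<eta>) Dw D2w (wt \<eta>)"
  unfolding C21_on_def case_prod_unfold
proof (intro conjI ballI)
  show "open U" unfolding U_def by (intro open_Collect_conj open_Collect_less continuous_intros)
  fix p assume p: "p \<in> U"
  then have p': "0 < S (snd p)" "snd p < t1" using U_iff[of "fst p" "snd p"] by auto
  show "((\<lambda>z. w \<eta> z (snd p)) has_derivative (\<lambda>h. Dw (fst p) (snd p) \<bullet> h)) (at (fst p))"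
    by (rule w_has_derivative_space[OF p'(1)])
  show "((\<lambda>z. Dw z (snd p)) has_derivative (\<lambda>h. D2w (fst p) (snd p) *v h)) (at (fst p))"
    by (rule Dw_has_derivative_space[OF p'(1)])
  show "((\<lambda>r. w \<eta> (fst p) r) has_real_derivative wt \<eta> (fst p) (snd p)) (at (snd p))"
    by (rule w_has_derivative_time[OF p'])
next
  have S: "\<forall>p\<in>U. S (snd p) \<noteq> 0" "\<forall>p\<in>U. (S (snd p))^2 \<noteq> 0"
    and t1: "\<forall>p\<in>U. t1 - snd p \<noteq> 0" "\<forall>p\<in>U. (t1 - snd p)^2 \<noteq> 0"
    using U_iff by force+
  have cS: "continuous_on U (\<lambda>p. S (snd p))" unfolding S_def by (intro continuous_intros)
  show "continuous_on U (\<lambda>p. w \<eta> (fst p) (snd p))"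
    unfolding w_def by (intro continuous_intros continuous_on_E t1)
  show "continuous_on U (\<lambda>p. Dw (fst p) (snd p))"
    unfolding Dw_def by (intro continuous_intros continuous_on_E cS S)
  show "continuous_on U (\<lambda>p. D2w (fst p) (snd p))"
    unfolding D2w_def outer_prod_def by (intro continuous_intros continuous_on_E cS S)
  show "continuous_on U (\<lambda>p. wt \<eta> (fst p) (snd p))"
    unfolding wt_def by (intro continuous_intros continuous_on_E cS S t1)
qed

lemma E_le_peak:
  assumes "s0 \<le> t"
  shows "E x t \<le> exp (\<theta> - m * ln \<sigma>)"
proof -
  have "\<sigma> \<le> S t" using assms by (simp add: S_def)
  then have "m * ln \<sigma> \<le> m * ln (S t)" using \<sigma>_pos m_nonneg by (simp add: mult_left_mono)
  moreover have "0 \<le> K * (t - s0)" using assms K_nonneg by simp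
  moreover have "0 \<le> a * ((x - y0) \<bullet> (x - y0)) / S t" using \<open>\<sigma> \<le> S t\<close> \<sigma>_pos a_pos by simp
  ultimately show ?thesis unfolding E_def by simp
qed

text \<open>The only place where 0 \<le> M is needed: together with c \<le> 0 it bounds c r for r > w.\<close>

lemma zeroth_order_term_le:
  assumes "(x,t) \<in> D" "t < t1" "0 \<le> \<eta>" "w \<eta> x t < r"
  shows "c x t * r \<le> C * (\<epsilon> * E x t)"
proof -
  have bc: "c x t \<le> 0" "- c x t \<le> C" using coeff_bounds assms(1) by auto
  have "0 < E x t" unfolding E_def by simp
  show ?thesis
  proof (cases "0 \<le> r")
    case True
    then show ?thesis
      using bc C_nonneg \<epsilon>_pos \<open>0 < E x t\<close> by (smt (verit) mult_nonneg_nonneg mult_nonpos_nonneg)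
  next
    case False
    have "- \<epsilon> * E x t \<le> w \<eta> x t"
      unfolding w_def using M_nonneg \<epsilon>_pos assms(2,3) by (simp add: algebra_simps)
    then have "(- c x t) * (- r) \<le> C * (\<epsilon> * E x t)"
      using assms(4) bc False by (intro mult_mono) auto
    then show ?thesis by simp
  qed
qed

text \<open>With a = 1/(2 lam) the upper bound from (S) collapses to \<epsilon> E (- a (|x - y0|/S - C)^2 - 1).\<close>

lemma w_strict_supersolution:
  assumes xt: "(x,t) \<in> D" and St: "0 < S t" and "t < t1" "0 \<le> \<eta>" and r: "w \<eta> x t < r"
  shows "F x t r (Dw x t) (D2w x t) - wt \<eta> x t < 0"
proof -
  define EE where "EE = E x t"
  define nz where "nz = norm (x - y0)"
  define c1 where "c1 = \<epsilon> * EE * (2 * a / S t)"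
  define c2 where "c2 = \<epsilon> * EE * (4 * a^2 / (S t)^2)"
  have EE: "0 < EE" unfolding EE_def E_def by simp
  have "b x t \<le> C" using coeff_bounds xt by auto
  have inner_nz: "(x - y0) \<bullet> (x - y0) = nz^2" unfolding nz_def by (simp add: power2_norm_eq_inner)
  have F0: "F x t 0 0 0 = 0" using F_zero xt by auto
  have c1: "0 \<le> c1" and c2: "0 \<le> c2" unfolding c1_def c2_def using \<epsilon>_pos EE a_pos St by auto
  have "D2w x t = c1 *\<^sub>R mat 1 - c2 *\<^sub>R outer_prod (x - y0)"
    unfolding D2w_def c1_def c2_def EE_def ..
  then have "F x t r (Dw x t) (D2w x t)
      \<le> Lam * c1 * CARD('n) - lam * c2 * nz^2 + b x t * norm (Dw x t) + c x t * r"
    unfolding inner_nz[symmetric] using struct_S_upper_bound[OF struct_F xt F0 c1 c2] by simp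
  moreover have "b x t * norm (Dw x t) \<le> C * (\<epsilon> * EE * (2 * a / S t) * nz)"
  proof -
    have "norm (Dw x t) = \<epsilon> * EE * (2 * a / S t) * nz"
      unfolding Dw_def EE_def[symmetric] nz_def using \<epsilon>_pos EE a_pos St by simp
    moreover have "0 \<le> \<epsilon> * EE * (2 * a / S t) * nz"
      unfolding nz_def using \<epsilon>_pos EE a_pos St by simp
    ultimately show ?thesis using \<open>b x t \<le> C\<close> by (simp only: mult_right_mono)
  qed
  moreover have "c x t * r \<le> C * (\<epsilon> * EE)"
    unfolding EE_def using zeroth_order_term_le xt assms(3-5) .
  moreover have "- wt \<eta> x t \<le> \<epsilon> * EE * (- m / S t - K + a * nz^2 / (S t)^2)"
    unfolding wt_def EE_def[symmetric] inner_nz using \<open>0 \<le> \<eta>\<close> by simp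
  moreover have "Lam * c1 * CARD('n) - lam * c2 * nz^2 + C * (\<epsilon> * EE * (2 * a / S t) * nz)
      + C * (\<epsilon> * EE) + \<epsilon> * EE * (- m / S t - K + a * nz^2 / (S t)^2)
      = \<epsilon> * EE * (- a * (nz / S t - C)^2 - 1)"
  proof -
    have "lam = 1 / (2 * a)" using lam_pos by (simp add: a_def)
    then show ?thesis
      unfolding c1_def c2_def m_def K_def using a_pos St by (simp add: field_simps power2_eq_square)
  qed
  moreover have "\<epsilon> * EE * (- a * (nz / S t - C)^2 - 1) < 0"
  proof (rule mult_pos_neg)
    have "0 \<le> a * (nz / S t - C)^2" using a_pos by simp
    then show "- a * (nz / S t - C)^2 - 1 < 0" by simp
  qed (use \<epsilon>_pos EE in simp)
  ultimately show ?thesis by linarith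
qed

lemma u_minus_w_no_positive_local_max:
  assumes xt: "(x,t) \<in> D" "s0 \<le> t" "t < t1" and "0 \<le> \<eta>" "w \<eta> x t < u x t" "0 < r"
    and local_max: "\<forall>(y,s)\<in>test_nbhd D x t r. u y s - w \<eta> y s \<le> u x t - w \<eta> x t"
  shows False
proof -
  have "(x,t) \<in> U" "0 < S t" using xt \<sigma>_pos U_iff by (auto simp: S_def)
  then have "0 \<le> F x t (u x t) (Dw x t) (D2w x t) - wt \<eta> x t"
    using subsolution xt C21_on_w \<open>0 < r\<close> local_max unfolding visc_sub_def by blast
  moreover have "F x t (u x t) (Dw x t) (D2w x t) - wt \<eta> x t < 0"
    using w_strict_supersolution assms \<open>0 < S t\<close> by blast
  ultimately show False by simp
qed

definition \<kappa> :: "real \<Rightarrow> real" where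
  "\<kappa> \<eta> = \<eta> / (\<epsilon> * exp (\<theta> - m * ln \<sigma>) + 1)"

lemma \<kappa>_pos: "0 < \<eta> \<Longrightarrow> 0 < \<kappa> \<eta>"
  unfolding \<kappa>_def using \<epsilon>_pos by (simp add: add_pos_pos)

lemma u_lt_w_near_top:
  assumes "0 < \<eta>" "(x,t) \<in> D" "s0 \<le> t" "t < t1" "t1 - \<kappa> \<eta> < t"
  shows "u x t < w \<eta> x t"
proof -
  define Eb where "Eb = exp (\<theta> - m * ln \<sigma>)"
  have pos: "0 < \<epsilon> * Eb + 1" using \<epsilon>_pos by (simp add: Eb_def add_pos_pos)
  have "t1 - t \<le> \<eta> / (\<epsilon> * Eb + 1)" using assms(5) by (simp add: \<kappa>_def Eb_def)
  then have "(t1 - t) * (\<epsilon> * Eb + 1) \<le> \<eta>" using pos by (simp add: pos_le_divide_eq)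
  then have "\<epsilon> * Eb + 1 \<le> \<eta> / (t1 - t)"
    using \<open>t < t1\<close> by (simp add: pos_le_divide_eq mult.commute)
  moreover have "\<epsilon> * E x t \<le> \<epsilon> * Eb"
    unfolding Eb_def using E_le_peak[OF \<open>s0 \<le> t\<close>] \<epsilon>_pos by simp
  moreover have "w \<eta> x t = M - \<epsilon> * E x t + \<epsilon> + \<eta> / (t1 - t)"
    unfolding w_def by (simp add: algebra_simps)
  moreover have "u x t \<le> M" using u_le_M \<open>(x,t) \<in> D\<close> by auto
  ultimately show ?thesis using \<epsilon>_pos by linarith
qed

lemma u_minus_w_no_positive_max_in_cylinder:
  assumes "0 < \<eta>"
    and cyl_D: "\<forall>x t. dist x x1 \<le> R \<and> s0 \<le> t \<and> t < t1 \<longrightarrow> (x,t) \<in> D"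
    and xs: "dist xs x1 < R" "s0 < ts" "ts \<le> t1 - \<kappa> \<eta>" and pos: "w \<eta> xs ts < u xs ts"
    and max: "\<forall>y s. dist y x1 \<le> R \<and> s0 \<le> s \<and> s \<le> t1 - \<kappa> \<eta> \<longrightarrow>
                 u y s - w \<eta> y s \<le> u xs ts - w \<eta> xs ts"
  shows False
proof -
  define r where "r = min (R - dist xs x1) (min (ts - s0) (t1 - ts))"
  have "0 < r" using xs \<kappa>_pos[OF \<open>0 < \<eta>\<close>] by (simp add: r_def)
  have in_D: "(xs,ts) \<in> D" using cyl_D xs \<kappa>_pos[OF \<open>0 < \<eta>\<close>] by simp
  have "\<forall>(y,s)\<in>test_nbhd D xs ts r. u y s - w \<eta> y s \<le> u xs ts - w \<eta> xs ts"
  proof (clarify)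
    fix y s assume "(y,s) \<in> test_nbhd D xs ts r"
    then have ys: "dist y xs < R - dist xs x1" "s0 < s" "s < t1" "(y,s) \<in> D"
      using in_D by (auto simp: test_nbhd_def r_def abs_less_iff)
    then have "dist y x1 \<le> R" using dist_triangle[of y x1 xs] by linarith
    then show "u y s - w \<eta> y s \<le> u xs ts - w \<eta> xs ts"
      using max u_lt_w_near_top[OF \<open>0 < \<eta>\<close> ys(4)] ys pos by (cases "s \<le> t1 - \<kappa> \<eta>") force+
  qed
  then show False
    using u_minus_w_no_positive_local_max[OF in_D _ _ _ pos \<open>0 < r\<close>] xs \<kappa>_pos[OF \<open>0 < \<eta>\<close>] \<open>0 < \<eta>\<close>
    by simp
qed

lemma u_le_w_on_cylinder:
  assumes "0 < \<eta>"
    and cyl_D: "\<forall>x t. dist x x1 \<le> R \<and> s0 \<le> t \<and> t < t1 \<longrightarrow> (x,t) \<in> D"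
    and lateral: "\<forall>x t. dist x x1 = R \<and> s0 \<le> t \<and> t < t1 \<longrightarrow> E x t \<le> 1"
    and bottom: "\<forall>x. dist x x1 \<le> R \<longrightarrow> u x s0 \<le> w \<eta> x s0"
    and xt: "dist x x1 \<le> R" "s0 \<le> t" "t < t1"
  shows "u x t \<le> w \<eta> x t"
proof (rule ccontr)
  assume "\<not> ?thesis"
  then have gt: "w \<eta> x t < u x t" by simp
  define f where "f p = u (fst p) (snd p) - w \<eta> (fst p) (snd p)" for p
  define Kc where "Kc = cball x1 R \<times> {s0..t1 - \<kappa> \<eta>}"
  have Kc_iff: "(y,s) \<in> Kc \<longleftrightarrow> dist y x1 \<le> R \<and> s0 \<le> s \<and> s \<le> t1 - \<kappa> \<eta>" for y s
    by (auto simp: Kc_def dist_commute)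
  have Kc_D: "Kc \<subseteq> D" and Kc_U: "Kc \<subseteq> U"
    using Kc_iff cyl_D \<kappa>_pos[OF \<open>0 < \<eta>\<close>] \<sigma>_pos by (force simp: U_def)+
  have "(x,t) \<in> Kc" using Kc_iff xt gt u_lt_w_near_top[OF \<open>0 < \<eta>\<close> _ xt(2,3)] cyl_D by force
  have "continuous_on Kc (\<lambda>p. u (fst p) (snd p))"
    using continuous_on_subset[OF u_cont] Kc_D by (auto simp: case_prod_unfold)
  moreover have "continuous_on Kc (\<lambda>p. w \<eta> (fst p) (snd p))"
    using continuous_on_subset[of U] C21_on_w Kc_U by (auto simp: C21_on_def case_prod_unfold)
  ultimately have "continuous_on Kc f" unfolding f_def by (intro continuous_intros)
  moreover have "compact Kc" unfolding Kc_def by (intro compact_Times compact_cball compact_Icc)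
  ultimately obtain xs ts where max: "(xs,ts) \<in> Kc" "\<forall>p\<in>Kc. f p \<le> f (xs,ts)"
    using continuous_attains_sup[of Kc f] \<open>(x,t) \<in> Kc\<close> by (metis empty_iff prod.exhaust)
  have pos: "0 < f (xs,ts)" using max(2) \<open>(x,t) \<in> Kc\<close> gt unfolding f_def by force
  have ts: "dist xs x1 \<le> R" "s0 \<le> ts" "ts \<le> t1 - \<kappa> \<eta>" "ts < t1"
    using max(1) Kc_iff \<kappa>_pos[OF \<open>0 < \<eta>\<close>] by auto
  have "dist xs x1 < R"
  proof (rule ccontr)
    assume "\<not> ?thesis"
    then have "E xs ts \<le> 1" using lateral ts by simp
    moreover have "0 \<le> \<eta> / (t1 - ts)" using \<open>0 < \<eta>\<close> ts by simp
    moreover have "u xs ts \<le> M" using u_le_M Kc_D max(1) by auto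
    moreover have "f (xs,ts) = u xs ts - M + \<epsilon> * E xs ts - \<epsilon> - \<eta> / (t1 - ts)"
      unfolding f_def w_def by (simp add: algebra_simps)
    ultimately have "f (xs,ts) \<le> 0" using \<epsilon>_pos mult_left_le[of "E xs ts" \<epsilon>] by linarith
    then show False using pos by simp
  qed
  moreover have "s0 < ts" using pos bottom ts unfolding f_def by (cases "ts = s0") auto
  moreover have "\<forall>y s. dist y x1 \<le> R \<and> s0 \<le> s \<and> s \<le> t1 - \<kappa> \<eta> \<longrightarrow> f (y,s) \<le> f (xs,ts)"
    using max(2) Kc_iff by blast
  ultimately show False
    using u_minus_w_no_positive_max_in_cylinder[OF \<open>0 < \<eta>\<close> cyl_D _ _ ts(3)] pos
    unfolding f_def by simp
qed

lemma E_apex_le_one: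
  assumes apex: "(x1,t1) \<in> D \<union> upper_base D" "u x1 t1 = M" and "s0 < t1" "0 \<le> R"
    and cyl_D: "\<forall>x t. dist x x1 \<le> R \<and> s0 \<le> t \<and> t < t1 \<longrightarrow> (x,t) \<in> D"
    and lateral: "\<forall>x t. dist x x1 = R \<and> s0 \<le> t \<and> t < t1 \<longrightarrow> E x t \<le> 1"
    and bottom: "\<forall>x. dist x x1 \<le> R \<longrightarrow> u x s0 \<le> M - \<epsilon> * (E x s0 - 1)"
  shows "E x1 t1 \<le> 1"
proof -
  have below: "u x1 t \<le> M - \<epsilon> * (E x1 t - 1)" if t: "s0 \<le> t" "t < t1" for t
  proof (rule field_le_epsilon)
    fix e :: real assume "0 < e"
    then have "\<forall>x. dist x x1 \<le> R \<longrightarrow> u x s0 \<le> w (e * (t1 - t)) x s0"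
      using bottom t \<open>s0 < t1\<close> by (auto simp: w_def intro: order_trans)
    then have "u x1 t \<le> w (e * (t1 - t)) x1 t"
      using u_le_w_on_cylinder[OF _ cyl_D lateral] \<open>0 < e\<close> t \<open>0 \<le> R\<close> by simp
    then show "u x1 t \<le> M - \<epsilon> * (E x1 t - 1) + e" using t by (simp add: w_def)
  qed
  have "((\<lambda>p. u (fst p) (snd p)) \<longlongrightarrow> M) (at (x1,t1) within D \<union> upper_base D)"
    using u_cont apex unfolding continuous_on_def case_prod_unfold by force
  moreover have "filterlim (\<lambda>t. (x1,t)) (at (x1,t1) within D \<union> upper_base D) (at_left t1)"
  proof (intro filterlim_at_withinI)
    show "((\<lambda>t. (x1,t)) \<longlongrightarrow> (x1,t1)) (at_left t1)" by (intro tendsto_intros)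
    show "eventually (\<lambda>t. (x1,t) \<in> D \<union> upper_base D - {(x1,t1)}) (at_left t1)"
      unfolding eventually_at_left_field using cyl_D \<open>s0 < t1\<close> \<open>0 \<le> R\<close>
      by (intro exI[of _ s0]) auto
  qed
  ultimately have lim_u: "((\<lambda>t. u x1 t) \<longlongrightarrow> M) (at_left t1)"
    using filterlim_compose[of "\<lambda>p. u (fst p) (snd p)" "nhds M" _ "\<lambda>t. (x1,t)"] by simp
  have "isCont (\<lambda>t. E x1 t) t1"
    using E_has_derivative_time[of t1 x1] \<sigma>_pos \<open>s0 < t1\<close> by (auto simp: S_def intro: DERIV_isCont)
  then have "((\<lambda>t. M - \<epsilon> * (E x1 t - 1)) \<longlongrightarrow> M - \<epsilon> * (E x1 t1 - 1)) (at_left t1)"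
    by (intro tendsto_intros tendsto_within_subset[OF isContD]) auto
  moreover have "eventually (\<lambda>t. u x1 t \<le> M - \<epsilon> * (E x1 t - 1)) (at_left t1)"
    unfolding eventually_at_left_field using below \<open>s0 < t1\<close> by (intro exI[of _ s0]) auto
  ultimately have "M \<le> M - \<epsilon> * (E x1 t1 - 1)"
    using tendsto_le[OF trivial_limit_at_left_real _ lim_u] by blast
  then show ?thesis using \<epsilon>_pos by (simp add: mult_le_0_iff)
qed

lemma E_dist: "E x t = exp (\<theta> - m * ln (S t) - K * (t - s0) - a * (dist x y0)^2 / S t)"
  by (simp add: E_def dist_norm dot_square_norm)

lemma E_le_one_lateral:
  assumes \<theta>: "\<theta> = m * ln (t1 - s0 + \<sigma>) + K * (t1 - s0) + a * (dist x1 y0)^2 / (t1 - s0 + \<sigma>) + 1"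
    and \<delta>: "\<sigma> \<le> \<delta>" "\<delta> \<le> 1" "\<delta> \<le> R / 2" "\<delta> * (2 * m + 2 * K + 2 + a) \<le> a * R^2 / 4"
    and y0: "dist y0 x1 \<le> \<delta>" "t1 - \<delta> \<le> s0" "s0 < t1"
    and xt: "dist x x1 = R" "s0 \<le> t" "t < t1"
  shows "E x t \<le> 1"
proof -
  have "R - \<delta> \<le> dist x y0" using xt y0 dist_triangle[of x x1 y0] by simp
  then have "\<theta> - m * ln (t - s0 + \<sigma>) - K * (t - s0) - a * (dist x y0)^2 / (t - s0 + \<sigma>) \<le> 0"
    unfolding \<theta> using xt y0 \<sigma>_pos \<delta>
    by (intro lateral_exponent_nonpos[OF m_nonneg K_nonneg a_pos]) (auto simp: dist_commute)
  then show ?thesis unfolding E_dist S_def by simp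
qed

lemma E_le_one_bottom:
  assumes \<theta>: "\<theta> = m * ln (t1 - s0 + \<sigma>) + K * (t1 - s0) + a * (dist x1 y0)^2 / (t1 - s0 + \<sigma>) + 1"
    and small: "m * (\<sigma> * ln (t1 - s0 + \<sigma>) - \<sigma> * ln \<sigma>)
                + \<sigma> * (K * (t1 - s0) + a * (dist x1 y0)^2 / (t1 - s0) + 1) < a * \<rho>^2"
    and "0 \<le> \<rho>" "\<rho> \<le> dist x y0" "s0 < t1"
  shows "E x s0 \<le> 1"
proof -
  have "\<theta> - m * ln \<sigma> - a * (dist x y0)^2 / \<sigma> \<le> 0"
    unfolding \<theta> using assms a_pos \<sigma>_pos by (intro bottom_exponent_nonpos) auto
  then show ?thesis unfolding E_dist S_def by simp
qed

lemma E_apex: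
  assumes "\<theta> = m * ln (t1 - s0 + \<sigma>) + K * (t1 - s0) + a * (dist x1 y0)^2 / (t1 - s0 + \<sigma>) + 1"
  shows "E x1 t1 = exp 1"
  unfolding E_dist S_def unfolding assms by simp

end

section \<open>Propagation of the maximum\<close>

context max_principle_setting
begin

lemma u_stays_below_M_nearby:
  assumes "(y0,s0) \<in> D" "u y0 s0 < M"
  obtains \<rho> where "0 < \<rho>" "\<And>y. dist y y0 \<le> \<rho> \<Longrightarrow> (y,s0) \<in> D \<Longrightarrow> u y s0 \<le> (M + u y0 s0) / 2"
proof -
  obtain dd where "0 < dd" and dd: "\<forall>p\<in>D \<union> upper_base D. dist p (y0,s0) < dd \<longrightarrow>
      dist ((\<lambda>(x,t). u x t) p) ((\<lambda>(x,t). u x t) (y0,s0)) < (M - u y0 s0) / 2"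
    using u_cont assms unfolding continuous_on_iff by (metis UnI1 half_gt_zero diff_gt_0_iff_gt)
  have "u y s0 \<le> (M + u y0 s0) / 2" if "dist y y0 \<le> dd / 2" "(y,s0) \<in> D" for y
  proof -
    have "dist (y,s0) (y0,s0) < dd" using that \<open>0 < dd\<close> by (simp add: dist_Pair_Pair)
    then have "\<bar>u y s0 - u y0 s0\<bar> < (M - u y0 s0) / 2" using dd that(2) by (force simp: dist_real_def)
    then show ?thesis by argo
  qed
  then show ?thesis using that[of "dd / 2"] \<open>0 < dd\<close> by simp
qed

lemma u_eq_M_below_apex:
  assumes apex: "(x1,t1) \<in> D \<union> upper_base D" "u x1 t1 = M"
    and cyl_D: "\<forall>x t. dist x x1 \<le> R \<and> s0 \<le> t \<and> t < t1 \<longrightarrow> (x,t) \<in> D"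
    and \<delta>: "0 < \<delta>" "\<delta> \<le> 1" "\<delta> \<le> R / 2" "\<delta> * (2 * m + 2 * K + 2 + a) \<le> a * R^2 / 4"
    and y0: "dist y0 x1 \<le> \<delta>" "t1 - \<delta> \<le> s0" "s0 < t1"
  shows "u y0 s0 = M"
proof (rule ccontr)
  have y0_D: "(y0,s0) \<in> D" using cyl_D y0 \<delta> by auto
  assume "u y0 s0 \<noteq> M"
  then have "u y0 s0 < M" using u_le_M y0_D by fastforce
  then obtain \<rho>0 where "0 < \<rho>0"
    and \<rho>0: "\<And>y. dist y y0 \<le> \<rho>0 \<Longrightarrow> (y,s0) \<in> D \<Longrightarrow> u y s0 \<le> (M + u y0 s0) / 2"
    using u_stays_below_M_nearby[OF y0_D] by blast
  define \<rho> where "\<rho> = min \<rho>0 (R / 2)"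
  have "0 < \<rho>" using \<open>0 < \<rho>0\<close> \<delta> by (simp add: \<rho>_def)
  have u_low: "u y s0 \<le> (M + u y0 s0) / 2" if "dist y y0 \<le> \<rho>" for y
    using \<rho>0 cyl_D y0 \<delta>(3) that dist_triangle[of y x1 y0] by (simp add: \<rho>_def)
  \<comment> \<open>\<sigma> is small enough for E \<le> 1 on the bottom outside the \<rho>-ball around y0\<close>
  obtain \<sigma> where \<sigma>: "0 < \<sigma>" "\<sigma> \<le> \<delta>"
    and small: "m * (\<sigma> * ln (t1 - s0 + \<sigma>) - \<sigma> * ln \<sigma>)
                + \<sigma> * (K * (t1 - s0) + a * (dist x1 y0)^2 / (t1 - s0) + 1) < a * \<rho>^2"
    using small_shift_exists[of "t1 - s0" "a * \<rho>^2" \<delta>] y0 \<delta> a_pos \<open>0 < \<rho>\<close> by auto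
  \<comment> \<open>normalises the bump to E x1 t1 = e\<close>
  define \<theta> where "\<theta> = m * ln (t1 - s0 + \<sigma>) + K * (t1 - s0) + a * (dist x1 y0)^2 / (t1 - s0 + \<sigma>) + 1"
  define \<epsilon> where "\<epsilon> = (M - u y0 s0) / 2 / exp (\<theta> - m * ln \<sigma>)"
  interpret bump_barrier D F u lam Lam b c C M y0 s0 \<sigma> \<theta> \<epsilon> t1
    by unfold_locales (use \<sigma> \<open>u y0 s0 < M\<close> in \<open>simp_all add: \<epsilon>_def\<close>)
  have "E x1 t1 \<le> 1"
  proof (rule E_apex_le_one[OF apex y0(3) _ cyl_D])
    show "0 \<le> R" using \<delta> by simp
    show "\<forall>x t. dist x x1 = R \<and> s0 \<le> t \<and> t < t1 \<longrightarrow> E x t \<le> 1"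
      using E_le_one_lateral[OF \<theta>_def \<sigma>(2) \<delta>(2-4) y0] by blast
    show "\<forall>x. dist x x1 \<le> R \<longrightarrow> u x s0 \<le> M - \<epsilon> * (E x s0 - 1)"
    proof (intro allI impI)
      fix x assume "dist x x1 \<le> R"
      show "u x s0 \<le> M - \<epsilon> * (E x s0 - 1)"
      proof (cases "dist x y0 \<le> \<rho>")
        case True
        have "\<epsilon> * E x s0 \<le> \<epsilon> * exp (\<theta> - m * ln \<sigma>)" using E_le_peak[of s0 x] \<epsilon>_pos by simp
        also have "\<dots> = (M - u y0 s0) / 2" by (simp add: \<epsilon>_def)
        finally have "\<epsilon> * E x s0 \<le> (M - u y0 s0) / 2" .
        then show ?thesis using u_low[OF True] \<epsilon>_pos by (simp add: algebra_simps)
      next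
        case False
        then have "\<epsilon> * (E x s0 - 1) \<le> 0"
          using E_le_one_bottom[OF \<theta>_def small _ _ y0(3)] \<epsilon>_pos \<open>0 < \<rho>\<close>
          by (simp add: mult_nonneg_nonpos)
        moreover have "u x s0 \<le> M" using u_le_M cyl_D \<open>dist x x1 \<le> R\<close> y0 by auto
        ultimately show ?thesis by linarith
      qed
    qed
  qed
  then show False using E_apex[OF \<theta>_def] by simp
qed

lemma max_spreads_to_past_cylinder:
  assumes "(x1,t1) \<in> D \<union> upper_base D" "u x1 t1 = M"
  shows "\<exists>\<delta>>0. \<forall>x t. dist x x1 < \<delta> \<and> t1 - \<delta> < t \<and> t < t1 \<longrightarrow> u x t = M"
proof -
  obtain h where "0 < h" and h: "\<forall>x t. dist x x1 < h \<and> t1 - h < t \<and> t < t1 \<longrightarrow> (x,t) \<in> D"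
    using past_cylinder_in_domain[OF open_D assms(1)] by blast
  define R where "R = h / 2"
  define C0 where "C0 = 2 * m + 2 * K + 2 + a"
  define \<delta> where "\<delta> = min (R / 2) (min 1 (a * R^2 / 4 / C0))"
  have "0 < C0" using m_nonneg K_nonneg a_pos by (simp add: C0_def)
  have "\<delta> * C0 \<le> a * R^2 / 4 / C0 * C0"
    using \<open>0 < C0\<close> by (intro mult_right_mono) (simp_all add: \<delta>_def)
  then have "\<delta> * C0 \<le> a * R^2 / 4" using \<open>0 < C0\<close> by simp
  moreover have "0 < \<delta>" "\<delta> \<le> 1" "\<delta> \<le> R / 2"
    using \<open>0 < C0\<close> \<open>0 < h\<close> a_pos by (simp_all add: \<delta>_def R_def)
  ultimately have \<delta>: "0 < \<delta>" "\<delta> \<le> 1" "\<delta> \<le> R / 2" "\<delta> * (2 * m + 2 * K + 2 + a) \<le> a * R^2 / 4"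
    by (auto simp: C0_def)
  show ?thesis
  proof (intro exI[of _ \<delta>] conjI allI impI)
    fix y0 s0 assume y0: "dist y0 x1 < \<delta> \<and> t1 - \<delta> < s0 \<and> s0 < t1"
    have "\<forall>x t. dist x x1 \<le> R \<and> s0 \<le> t \<and> t < t1 \<longrightarrow> (x,t) \<in> D"
      using h y0 \<delta> \<open>0 < h\<close> by (simp add: R_def)
    then show "u y0 s0 = M" using u_eq_M_below_apex[OF assms _ \<delta>] y0 by simp
  qed (fact \<delta>)
qed

lemma max_propagates_along_broken_line:
  assumes apex: "(x0,t0) \<in> D \<union> upper_base D" "u x0 t0 = M" and "subordinate D (x0,t0) (x',t')"
  shows "u x' t' = M"
proof (rule ccontr)
  assume "u x' t' \<noteq> M"
  obtain ps where ps: "ps \<noteq> []" "hd ps = (x0,t0)" "last ps = (x',t')"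
    and in_D: "broken_line_set ps - {(x0,t0)} \<subseteq> D \<union> upper_base D"
    and inj: "inj_on snd (broken_line_set ps)"
    and below: "\<forall>q\<in>broken_line_set ps. snd q \<le> t0"
    using assms(3) unfolding subordinate_def by auto
  define L where "L = broken_line_set ps"
  have L_D: "L \<subseteq> D \<union> upper_base D" using in_D apex L_def by auto
  have "compact L" "connected L" using compact_connected_broken_line_set[OF ps(1)] L_def by auto
  have "(x',t') \<in> L" "(x0,t0) \<in> L"
    using hd_in_broken_line_set[OF ps(1)] last_in_broken_line_set[OF ps(1)] ps(2,3) L_def by auto
  have "continuous_on L (\<lambda>q. u (fst q) (snd q))"
    using continuous_on_subset[OF u_cont L_D] by (simp add: case_prod_unfold)
  then obtain qs where qs: "qs \<in> L" "u (fst qs) (snd qs) = M" "t' \<le> snd qs"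
    and lowest: "\<And>q. q \<in> L \<Longrightarrow> u (fst q) (snd q) = M \<Longrightarrow> t' \<le> snd q \<Longrightarrow> snd qs \<le> snd q"
  proof (rule lowest_point_of_level_set[OF \<open>compact L\<close> _ \<open>(x0,t0) \<in> L\<close>])
    show "t' \<le> snd (x0,t0)" using below \<open>(x',t') \<in> L\<close> unfolding L_def by force
  qed (use apex in auto)
  have "t' < snd qs"
  proof (rule ccontr)
    assume "\<not> t' < snd qs"
    then have "qs = (x',t')"
      using inj_onD[OF inj _ qs(1)[unfolded L_def] \<open>(x',t') \<in> L\<close>[unfolded L_def]] qs(3) by simp
    then show False using qs(2) \<open>u x' t' \<noteq> M\<close> by simp
  qed
  obtain \<delta> where "0 < \<delta>"
    and \<delta>: "\<forall>x t. dist x (fst qs) < \<delta> \<and> snd qs - \<delta> < t \<and> t < snd qs \<longrightarrow> u x t = M"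
    using max_spreads_to_past_cylinder[of "fst qs" "snd qs"] L_D qs(1,2) by auto
  have "\<exists>q\<in>L. snd q < snd qs \<and> dist q qs < min \<delta> (snd qs - t')"
    by (rule connected_inj_snd_approach_from_past[OF \<open>connected L\<close> inj[folded L_def]
          \<open>(x',t') \<in> L\<close> qs(1)]) (use \<open>t' < snd qs\<close> \<open>0 < \<delta>\<close> in auto)
  then obtain q where q: "q \<in> L" "snd q < snd qs" "dist q qs < min \<delta> (snd qs - t')" by blast
  have "dist (fst q) (fst qs) < \<delta>" "\<bar>snd q - snd qs\<bar> < min \<delta> (snd qs - t')"
    using q(3) dist_fst_le[of q qs] dist_snd_le[of q qs] by (auto simp: dist_real_def)
  then show False using \<delta> lowest[OF q(1)] q(2) by auto
qed

end

theorem theorem3p1: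
  fixes D :: "((real^'n) \<times> real) set"
    and F :: "real^'n \<Rightarrow> real \<Rightarrow> real \<Rightarrow> real^'n \<Rightarrow> real^'n^'n \<Rightarrow> real"
    and b c :: "real^'n \<Rightarrow> real \<Rightarrow> real"
    and lam Lam :: real
  assumes "open D" and "connected D" and "D \<noteq> {}"
    and "0 < lam" and "lam \<le> Lam"
    and "struct_S F (D \<union> upper_base D) lam Lam b c"
    and "\<forall>(x,t)\<in>D \<union> upper_base D. b x t \<ge> 0 \<and> c x t \<le> 0"
    and "bounded ((\<lambda>(x,t). b x t) ` D)" and "bounded ((\<lambda>(x,t). c x t) ` D)"
    and "continuous_on D (\<lambda>(x,t). b x t)" and "continuous_on D (\<lambda>(x,t). c x t)"
    and "\<forall>(x,t)\<in>D \<union> upper_base D. F x t 0 0 0 = 0"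
  shows "(\<forall>u M x0 t0.
            continuous_on (D \<union> upper_base D) (\<lambda>(x,t). u x t) \<and> visc_sub F D u \<and>
            (x0,t0) \<in> D \<union> upper_base D \<and> u x0 t0 = M \<and> 0 \<le> M \<and>
            (\<forall>(x,t)\<in>D \<union> upper_base D. u x t \<le> M) \<longrightarrow>
            (\<forall>(x',t')\<in>D. subordinate D (x0,t0) (x',t') \<longrightarrow> u x' t' = M))
       \<and> (\<forall>u M x0 t0.
            continuous_on (D \<union> upper_base D) (\<lambda>(x,t). u x t) \<and> visc_super F D u \<and>
            (x0,t0) \<in> D \<union> upper_base D \<and> u x0 t0 = M \<and> M \<le> 0 \<and>
            (\<forall>(x,t)\<in>D \<union> upper_base D. M \<le> u x t) \<longrightarrow>
            (\<forall>(x',t')\<in>D. subordinate D (x0,t0) (x',t') \<longrightarrow> u x' t' = M))"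
proof -
  obtain Cb Cc where "\<forall>v\<in>(\<lambda>(x,t). b x t) ` D. \<bar>v\<bar> \<le> Cb" "\<forall>v\<in>(\<lambda>(x,t). c x t) ` D. \<bar>v\<bar> \<le> Cc"
    using assms(8,9) unfolding bounded_real by blast
  then have coeff_bounds: "\<forall>(x,t)\<in>D. b x t \<le> max 0 (max Cb Cc) \<and> c x t \<le> 0 \<and> - c x t \<le> max 0 (max Cb Cc)"
    using assms(7) by fastforce
  have struct_D: "struct_S F D lam Lam b c" using assms(6) by (rule struct_S_subset) simp
  have propagate: "v x' t' = N"
    if "struct_S G D lam Lam b c" "\<forall>(x,t)\<in>D. G x t 0 0 0 = 0" "visc_sub G D v"
      "continuous_on (D \<union> upper_base D) (\<lambda>(x,t). v x t)" "\<forall>(x,t)\<in>D \<union> upper_base D. v x t \<le> N"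
      "0 \<le> N" "(x0,t0) \<in> D \<union> upper_base D" "v x0 t0 = N" "subordinate D (x0,t0) (x',t')"
    for G v N x0 t0 x' t'
  proof -
    have "max_principle_setting D G v lam Lam b c (max 0 (max Cb Cc)) N"
      using that assms(1,4,5) coeff_bounds by (intro max_principle_setting.intro) auto
    then show ?thesis using max_principle_setting.max_propagates_along_broken_line that(7-9) by blast
  qed
  show ?thesis
  proof (intro conjI allI impI ballI, goal_cases)
    case (1 u M x0 t0 p)
    then show ?case using propagate[OF struct_D, of u M x0 t0] assms(12) by auto
  next
    case (2 u M x0 t0 p)
    have "continuous_on (D \<union> upper_base D) (\<lambda>(x,t). - u x t)"
      using continuous_on_minus[OF 2(1)[THEN conjunct1]] by (simp add: case_prod_unfold)
    then show ?case
      using propagate[OF struct_S_reflect[OF struct_D] _ visc_super_reflect, of u "- M" x0 t0] 2 assms(12)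
      by auto
  qed
qed

end
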